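(* Let $V$ be a finite-dimensional real vector space, $\mu$ a probability measure on $\mathrm{GL}(V)$ with finite first moment, $W$ a $\Gamma_\mu$-invariant subspace, and $\bar\nu$ a $\mu$-stationary ergodic probability measure on $\mathbb{P}(V/W)$. If $\nu$ is a $\mu$-stationary lift of $\bar\nu$ (a $\mu$-stationary probability on $\mathbb{P}(V)\setminus\mathbb{P}(W)$ projecting to $\bar\nu$), then $\alpha(\bar\nu)=\alpha(\nu)$.
   Context: Finite first moment: $\int\log\max\{\|g\|,\|g^{-1}\|\}d\mu<\infty$. $\Gamma_\mu$ is the closed subsemigroup generated by the support of $\mu$. For a probability $\eta$ on $\mathbb{P}(E)$ ($E=V$ or $V/W$, with norms), $\alpha(\eta):=\iint\log\frac{\|gv\|}{\|v\|}\,d\mu(g)\,d\eta(\mathbb{R}v)$. Projection to $\mathbb{P}(V/W)$ is via the map induced by $V\to V/W$. Stationary: $\eta=\int g_*\eta\,d\mu(g)$; ergodic: extremal among stationary probabilities. *)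

theory Defs
  imports "HOL-Probability.Probability"
begin

text \<open>V is modelled as real^'n (Euclidean norm); GL(V) as the invertible matrices.\<close>

definition GL :: "(real^'n^'n) set" where
  "GL = {g. invertible g}"

definition supp :: "(real^'n^'n) measure \<Rightarrow> (real^'n^'n) set" where
  "supp \<mu> = {g \<in> GL. \<forall>U. open U \<longrightarrow> g \<in> U \<longrightarrow> emeasure \<mu> U > 0}"

definition Gamma :: "(real^'n^'n) measure \<Rightarrow> (real^'n^'n) set" where
  "Gamma \<mu> = \<Inter>{T. supp \<mu> \<subseteq> T \<and> T \<subseteq> GL \<and> (\<forall>a\<in>T. \<forall>b\<in>T. a ** b \<in> T)
                   \<and> closedin (top_of_set GL) T}"

text \<open>Projective space P(V/W): its points are the subspaces span(W + Rv), v not in W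
  (i.e. lines of V/W).  For W = {0} this is P(V), points being the lines span{v}.\<close>
definition proj_pts :: "(real^'n) set \<Rightarrow> (real^'n) set set" where
  "proj_pts W = {span (insert v W) | v. v \<notin> W}"

definition proj_space :: "(real^'n) set \<Rightarrow> (real^'n) set measure" where
  "proj_space W = sigma (proj_pts W)
     {A. A \<subseteq> proj_pts W \<and> {v. v \<notin> W \<and> span (insert v W) \<in> A} \<in> sets borel}"

definition act :: "real^'n^'n \<Rightarrow> (real^'n) set \<Rightarrow> (real^'n) set" where
  "act g L = (\<lambda>x. g *v x) ` L"

definition stationary :: "(real^'n^'n) measure \<Rightarrow> (real^'n) set \<Rightarrow> (real^'n) set measure \<Rightarrow> bool" where
  "stationary \<mu> W \<eta> \<longleftrightarrow> prob_space \<eta> \<and> sets \<eta> = sets (proj_space W) \<and>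
     (\<forall>A\<in>sets \<eta>. emeasure \<eta> A = (\<integral>\<^sup>+ g. emeasure \<eta> (act g -` A \<inter> space \<eta>) \<partial>\<mu>))"

definition ergodic :: "(real^'n^'n) measure \<Rightarrow> (real^'n) set \<Rightarrow> (real^'n) set measure \<Rightarrow> bool" where
  "ergodic \<mu> W \<eta> \<longleftrightarrow> stationary \<mu> W \<eta> \<and>
     (\<forall>\<eta>1 \<eta>2 (t::real). stationary \<mu> W \<eta>1 \<and> stationary \<mu> W \<eta>2 \<and> 0 < t \<and> t < 1 \<and>
        (\<forall>A\<in>sets \<eta>. emeasure \<eta> A = ennreal t * emeasure \<eta>1 A + ennreal (1 - t) * emeasure \<eta>2 A)
        \<longrightarrow> \<eta>1 = \<eta> \<and> \<eta>2 = \<eta>)"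

definition rep :: "(real^'n) set \<Rightarrow> (real^'n) set \<Rightarrow> real^'n" where
  "rep W L = (SOME v. v \<in> L \<and> v \<notin> W)"

text \<open>alpha(eta) with the quotient norm |v + W| = infdist v W on V/W
  (for W = {0} this is the norm of V).\<close>
definition alpha :: "(real^'n^'n) measure \<Rightarrow> (real^'n) set \<Rightarrow> (real^'n) set measure \<Rightarrow> real" where
  "alpha \<mu> W \<eta> = (\<integral>L. (\<integral>g. ln (infdist (g *v rep W L) W / infdist (rep W L) W) \<partial>\<mu>) \<partial>\<eta>)"

end

theory Submission
  imports Defs
begin

text \<open>
  Choose measurably a representative of each line (the one whose first nonzero coordinate is 1)
  and push \<open>\<nu>\<close> forward to a probability \<open>n\<close> on \<open>V\<close>, carried by \<open>V - W\<close>.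
  Then \<open>\<nu>\<close> and \<open>\<nu>bar\<close> are the images of \<open>n\<close> under \<open>x \<mapsto> [x]\<close> and \<open>x \<mapsto> [x + W]\<close>
  (the lines inside \<open>W\<close> being \<open>\<nu>\<close>-null), so both exponents are integrals over \<open>n \<times> \<mu>\<close> of cocycles
  \<open>\<sigma>\<^sub>U(g, x) = log (d(gx, U) / d(x, U))\<close>, with \<open>U = {0}\<close> and \<open>U = W\<close>.
  Both are bounded by \<open>log max(\<parallel>g\<parallel>, \<parallel>g\<inverse>\<parallel>)\<close>, hence integrable by the moment condition, and
  they differ by the coboundary \<open>f(gx) - f(x)\<close> of the homogeneous function
  \<open>f(x) = log (d(x, W) / |x|)\<close>.  Stationarity gives \<open>\<integral>\<integral> h(gx) d\<mu> dn = \<integral> h dn\<close> for bounded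
  homogeneous \<open>h\<close>; applied to the truncations of \<open>f\<close> it shows, by dominated convergence,
  that the coboundary integrates to zero.
\<close>

section \<open>Measurable representatives of lines\<close>

definition is_pivot :: "real^'n \<Rightarrow> 'n \<Rightarrow> bool" where
  "is_pivot v i \<longleftrightarrow> v $ i \<noteq> 0 \<and> (\<forall>j. to_nat j < to_nat i \<longrightarrow> v $ j = 0)"

text \<open>The sum has a single nonzero term when \<open>v \<noteq> 0\<close>; it is written as a sum so that
  measurability is automatic.\<close>

definition pivot_inv :: "real^'n \<Rightarrow> real" where
  "pivot_inv v = (\<Sum>i\<in>UNIV. if is_pivot v i then inverse (v $ i) else 0)"

definition pivot_normalize :: "real^'n \<Rightarrow> real^'n" where
  "pivot_normalize v = pivot_inv v *\<^sub>R v"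

lemma is_pivot_unique: "is_pivot v i \<Longrightarrow> is_pivot v j \<Longrightarrow> i = j"
  unfolding is_pivot_def by (metis linorder_neqE_nat to_nat_split)

lemma ex_pivot:
  assumes "v \<noteq> 0"
  shows "\<exists>i. is_pivot v i"
proof -
  have "\<exists>i. v $ i \<noteq> 0" using assms by (metis vec_eq_iff zero_index)
  then obtain i where "v $ i \<noteq> 0" "\<And>j. v $ j \<noteq> 0 \<Longrightarrow> to_nat i \<le> to_nat j"
    using ex_has_least_nat[of "\<lambda>i. v $ i \<noteq> 0" _ to_nat] by metis
  then have "is_pivot v i" unfolding is_pivot_def by force
  then show ?thesis ..
qed

lemma pivot_inv_eq: "is_pivot v i \<Longrightarrow> pivot_inv v = inverse (v $ i)"
proof -
  assume i: "is_pivot v i"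
  have "(\<Sum>j\<in>UNIV. if is_pivot v j then inverse (v $ j) else 0) = (\<Sum>j\<in>UNIV. if j = i then inverse (v $ j) else 0)"
    by (rule sum.cong) (use i is_pivot_unique in auto)
  then show ?thesis unfolding pivot_inv_def by simp
qed

lemma is_pivot_scaleR: "t \<noteq> 0 \<Longrightarrow> is_pivot (t *\<^sub>R v) i \<longleftrightarrow> is_pivot v i"
  unfolding is_pivot_def by simp

lemma pivot_normalize_scaleR:
  assumes t: "t \<noteq> 0"
  shows "pivot_normalize (t *\<^sub>R v) = pivot_normalize v"
proof (cases "v = 0")
  case False
  obtain i where i: "is_pivot v i" using ex_pivot[OF False] ..
  then have "pivot_inv (t *\<^sub>R v) = inverse t * pivot_inv v"
    using t by (simp add: pivot_inv_eq is_pivot_scaleR)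
  then show ?thesis using t by (simp add: pivot_normalize_def)
qed simp

lemma pivot_inv_nonzero: "v \<noteq> 0 \<Longrightarrow> pivot_inv v \<noteq> 0"
  using ex_pivot pivot_inv_eq is_pivot_def by fastforce

lemma pivot_normalize_nonzero: "v \<noteq> 0 \<Longrightarrow> pivot_normalize v \<noteq> 0"
  by (simp add: pivot_normalize_def pivot_inv_nonzero)

lemma span_singleton_scaleR: "c \<noteq> 0 \<Longrightarrow> span {c *\<^sub>R v} = span {v}"
  using span_image_scale[of "{v}" "\<lambda>_. c"] by simp

lemma span_pivot_normalize: "v \<noteq> 0 \<Longrightarrow> span {pivot_normalize v} = span {v}"
  by (simp add: pivot_normalize_def pivot_inv_nonzero span_singleton_scaleR)

lemma borel_measurable_pivot_normalize [measurable]: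
  "pivot_normalize \<in> borel_measurable (borel :: (real^'n) measure)"
  unfolding pivot_normalize_def pivot_inv_def is_pivot_def by measurable


section \<open>Projective spaces\<close>

lemma space_proj_space [simp]: "space (proj_space W) = proj_pts W"
  unfolding proj_space_def by (simp add: space_measure_of_conv)

lemma sets_proj_spaceI:
  assumes "A \<subseteq> proj_pts W" "{v. v \<notin> W \<and> span (insert v W) \<in> A} \<in> sets borel"
  shows "A \<in> sets (proj_space W)"
proof -
  have "sets (proj_space W) = sigma_sets (proj_pts W)
     {A. A \<subseteq> proj_pts W \<and> {v. v \<notin> W \<and> span (insert v W) \<in> A} \<in> sets borel}"
    unfolding proj_space_def by (rule sets_measure_of) auto
  then show ?thesis using assms by auto
qed

lemma measurable_proj_spaceI:
  assumes "f \<in> space M \<rightarrow> proj_pts W"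
    and "\<And>A. A \<subseteq> proj_pts W \<Longrightarrow> {v. v \<notin> W \<and> span (insert v W) \<in> A} \<in> sets borel \<Longrightarrow>
      f -` A \<inter> space M \<in> sets M"
  shows "f \<in> measurable M (proj_space W)"
  unfolding proj_space_def by (rule measurable_measure_of) (use assms in auto)

lemma span_insert_in_proj_pts: "v \<notin> W \<Longrightarrow> span (insert v W) \<in> proj_pts W"
  unfolding proj_pts_def by auto

lemma subspace_notin_proj_pts: "subspace W \<Longrightarrow> W \<notin> proj_pts W"
  unfolding proj_pts_def by (auto intro: span_base)

lemma subspace_in_borel: "subspace (W :: 'a::euclidean_space set) \<Longrightarrow> W \<in> sets borel"
  by (simp add: borel_closed closed_subspace)

lemma borel_measurable_proj_spaceI:
  fixes G :: "real^'n \<Rightarrow> 'b::topological_space"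
  assumes W: "subspace W" and G: "G \<in> borel_measurable borel"
    and FG: "\<And>v. v \<notin> W \<Longrightarrow> F (span (insert v W)) = G v"
  shows "F \<in> borel_measurable (proj_space W)"
proof (rule measurableI)
  fix A :: "'b set" assume A: "A \<in> sets borel"
  have "{v. v \<notin> W \<and> span (insert v W) \<in> F -` A \<inter> proj_pts W} = G -` A - W"
    using FG span_insert_in_proj_pts by auto
  also have "\<dots> \<in> sets borel"
    using measurable_sets[OF G A] subspace_in_borel[OF W] by (intro sets.Diff) auto
  finally show "F -` A \<inter> space (proj_space W) \<in> sets (proj_space W)"
    by (intro sets_proj_spaceI) auto
qed auto

lemma span_insert_zero: "span (insert v {0}) = span {v}"
  by (metis insert_commute span_insert_0)

lemma proj_pts_zero: "proj_pts {0} = {span {v} | v. v \<noteq> 0}"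
  unfolding proj_pts_def span_insert_zero by auto

lemma span_singleton_subset_subspace: "subspace W \<Longrightarrow> span {v} \<subseteq> W \<longleftrightarrow> v \<in> W"
  by (meson insert_subset span_base span_minimal subset_iff empty_subsetI)

lemma span_Un_span_singleton:
  assumes "subspace W"
  shows "span (span {v} \<union> W) = span (insert v W)"
proof (rule span_eq[THEN iffD2], intro conjI)
  show "span {v} \<union> W \<subseteq> span (insert v W)"
    using span_mono[of "{v}" "insert v W"] span_superset[of "insert v W"] by auto
  show "insert v W \<subseteq> span (span {v} \<union> W)"
    by (auto intro: span_base)
qed

lemma rep_span_insert:
  assumes W: "subspace W" and v: "v \<notin> W"
  obtains c w where "c \<noteq> 0" "w \<in> W" "rep W (span (insert v W)) = c *\<^sub>R v + w"
proof -
  have "\<exists>u. u \<in> span (insert v W) \<and> u \<notin> W" using v by (auto intro: span_base)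
  then have r: "rep W (span (insert v W)) \<in> span (insert v W)" "rep W (span (insert v W)) \<notin> W"
    unfolding rep_def by (metis (mono_tags, lifting) someI_ex)+
  moreover have "span W = W" using W by simp
  ultimately obtain c where c: "rep W (span (insert v W)) - c *\<^sub>R v \<in> W"
    using span_insert[of v W] by auto
  with r(2) have "c \<noteq> 0" by auto
  with c show ?thesis using that[of c "rep W (span (insert v W)) - c *\<^sub>R v"] by simp
qed

definition line_rep :: "(real^'n) set \<Rightarrow> real^'n" where
  "line_rep L = pivot_normalize (rep {0} L)"

lemma line_rep_span: "v \<noteq> 0 \<Longrightarrow> line_rep (span {v}) = pivot_normalize v"
  using rep_span_insert[OF subspace_single_0, of v]
  by (metis pivot_normalize_scaleR line_rep_def singletonD span_insert_zero add_0_right)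

lemma line_rep_proj_pts:
  assumes "L \<in> proj_pts {0}"
  shows "line_rep L \<noteq> 0" "span {line_rep L} = L"
proof -
  obtain v where "v \<noteq> 0" "L = span {v}" using assms by (auto simp: proj_pts_zero)
  then show "line_rep L \<noteq> 0" "span {line_rep L} = L"
    by (simp_all add: line_rep_span pivot_normalize_nonzero span_pivot_normalize)
qed

lemma measurable_line_rep: "line_rep \<in> borel_measurable (proj_space {0})"
  by (rule borel_measurable_proj_spaceI[OF subspace_single_0 borel_measurable_pivot_normalize])
    (simp add: span_insert_zero line_rep_span)

text \<open>The class of \<open>v\<close> in \<open>P(V/U)\<close>; on \<open>U\<close> itself it takes an arbitrary junk value in
  \<open>proj_pts U\<close>, so that it is a measurable map into \<open>proj_space U\<close>.\<close>

definition proj_class :: "(real^'n) set \<Rightarrow> real^'n \<Rightarrow> (real^'n) set" where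
  "proj_class U v = span (insert (if v \<in> U then (SOME u. u \<notin> U) else v) U)"

lemma proj_class_notin: "v \<notin> U \<Longrightarrow> proj_class U v = span (insert v U)"
  by (simp add: proj_class_def)

lemma proj_class_in_proj_pts: "U \<noteq> UNIV \<Longrightarrow> proj_class U v \<in> proj_pts U"
proof -
  assume "U \<noteq> UNIV"
  then have "(SOME u. u \<notin> U) \<notin> U" by (metis UNIV_eq_I someI_ex)
  then show ?thesis unfolding proj_class_def by (auto intro: span_insert_in_proj_pts)
qed

lemma measurable_proj_class:
  assumes U: "subspace U" "U \<noteq> UNIV"
  shows "proj_class U \<in> measurable borel (proj_space U)"
proof (rule measurable_proj_spaceI)
  show "proj_class U \<in> space borel \<rightarrow> proj_pts U" using proj_class_in_proj_pts[OF U(2)] by simp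
  fix A assume A: "{v. v \<notin> U \<and> span (insert v U) \<in> A} \<in> sets borel"
  have "proj_class U -` A = {v. v \<notin> U \<and> span (insert v U) \<in> A} \<union> (if proj_class U 0 \<in> A then U else {})"
    using subspace_0[OF U(1)] by (auto simp: proj_class_def split: if_splits)
  also have "\<dots> \<in> sets borel" using A subspace_in_borel[OF U(1)] by auto
  finally show "proj_class U -` A \<inter> space borel \<in> sets borel" by simp
qed

section \<open>Distance to an invariant subspace\<close>

lemma infdist_image_le:
  assumes "A \<noteq> {}" "f ` A \<subseteq> B" "0 \<le> K" "\<And>a. a \<in> A \<Longrightarrow> dist (f x) (f a) \<le> K * dist x a"
  shows "infdist (f x) B \<le> K * infdist x A"
proof -
  have le: "infdist (f x) B \<le> K * dist x a" if "a \<in> A" for a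
    using infdist_le[of "f a" B "f x"] assms(2,4) that by force
  show ?thesis
  proof (cases "K = 0")
    case True
    with le assms(1) show ?thesis by auto
  next
    case False
    with assms(3) have "infdist (f x) B / K \<le> (INF a\<in>A. dist x a)"
      by (intro cINF_greatest) (use le assms(1) in \<open>auto simp: field_simps\<close>)
    with assms(1,3) False show ?thesis by (simp add: infdist_notempty field_simps)
  qed
qed

lemma infdist_scaleR_subspace:
  fixes x :: "'a::real_normed_vector"
  assumes W: "subspace W"
  shows "infdist (c *\<^sub>R x) W = \<bar>c\<bar> * infdist x W"
proof -
  have le: "infdist (d *\<^sub>R y) W \<le> \<bar>d\<bar> * infdist y W" for d and y :: 'a
    by (rule infdist_image_le[where f="scaleR d"])
       (use W subspace_0[OF W] in \<open>auto simp: subspace_scale dist_norm scaleR_diff_right[symmetric]\<close>)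
  show ?thesis
  proof (cases "c = 0")
    case False
    have "infdist x W \<le> inverse \<bar>c\<bar> * infdist (c *\<^sub>R x) W"
      using False le[of "inverse c" "c *\<^sub>R x"] by simp
    then have "\<bar>c\<bar> * infdist x W \<le> infdist (c *\<^sub>R x) W"
      using False by (simp add: field_simps)
    with le[of c x] show ?thesis by simp
  qed (simp add: subspace_0[OF W])
qed

lemma infdist_add_subspace:
  fixes x :: "'a::real_normed_vector"
  assumes W: "subspace W" and w: "w \<in> W"
  shows "infdist (x + w) W = infdist x W"
proof -
  have le: "infdist (y + u) W \<le> infdist y W" if "u \<in> W" for y u :: 'a
  proof -
    have "infdist (y + u) W \<le> 1 * infdist y W"
      by (rule infdist_image_le) (use W that subspace_0[OF W] in \<open>auto simp: subspace_add dist_norm\<close>)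
    then show ?thesis by simp
  qed
  show ?thesis
    using le[OF w, of x] le[of "- w" "x + w"] W w by (simp add: subspace_neg)
qed

lemma infdist_pos_subspace:
  fixes x :: "'a::euclidean_space"
  shows "subspace W \<Longrightarrow> 0 < infdist x W \<longleftrightarrow> x \<notin> W"
  using in_closed_iff_infdist_zero[OF closed_subspace, of W x] infdist_nonneg[of x W] subspace_0
  by fastforce

lemma infdist_matrix_vector_le:
  fixes g :: "real^'n^'m"
  assumes W: "subspace W" and gW: "(\<lambda>x. g *v x) ` W \<subseteq> W'"
  shows "infdist (g *v x) W' \<le> onorm ((*v) g) * infdist x W"
proof (rule infdist_image_le[OF _ gW])
  fix a
  have "norm (g *v (x - a)) \<le> onorm ((*v) g) * norm (x - a)" by (rule onorm) simp
  then show "dist (g *v x) (g *v a) \<le> onorm ((*v) g) * dist x a"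
    by (simp add: dist_norm matrix_vector_mult_diff_distrib)
qed (use subspace_0[OF W] onorm_pos_le[of "(*v) g"] in auto)

lemma matrix_inv_mult_vector:
  fixes g :: "real^'n^'n"
  assumes "invertible g"
  shows "matrix_inv g *v (g *v x) = x" "g *v (matrix_inv g *v x) = x"
proof -
  have "g ** matrix_inv g = mat 1 \<and> matrix_inv g ** g = mat 1"
    using assms unfolding invertible_def matrix_inv_def by (rule someI_ex)
  then show "matrix_inv g *v (g *v x) = x" "g *v (matrix_inv g *v x) = x"
    by (simp_all add: matrix_vector_mul_assoc)
qed

lemma matrix_inv_image_subspace:
  fixes g :: "real^'n^'n"
  assumes g: "invertible g" and W: "subspace W" and gW: "(\<lambda>x. g *v x) ` W \<subseteq> W"
  shows "(\<lambda>x. matrix_inv g *v x) ` W \<subseteq> W"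
proof -
  have onto: "(\<lambda>x. g *v x) ` W = W"
  proof (rule subspace_dim_equal[OF _ W gW])
    show "subspace ((\<lambda>x. g *v x) ` W)"
      by (rule linear_subspace_image[OF matrix_vector_mul_linear W])
    have "inj ((*v) g)" using inj_matrix_vector_mult[OF g] by (simp add: inj_def)
    then have "dim ((\<lambda>x. g *v x) ` W) = dim W"
      by (intro dim_image_eq[OF matrix_vector_mul_linear]) (auto simp: inj_on_def inj_def)
    then show "dim W \<le> dim ((\<lambda>x. g *v x) ` W)" by simp
  qed
  show ?thesis
  proof
    fix y assume "y \<in> (\<lambda>x. matrix_inv g *v x) ` W"
    then obtain u where u: "u \<in> W" "y = matrix_inv g *v u" by auto
    moreover obtain w where "w \<in> W" "u = g *v w" using u(1) onto by blast
    ultimately show "y \<in> W" using matrix_inv_mult_vector(1)[OF g] by simp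
  qed
qed

lemma matrix_vector_notin_invariant:
  fixes g :: "real^'n^'n"
  assumes g: "invertible g" and W: "subspace W" and gW: "(\<lambda>x. g *v x) ` W \<subseteq> W" and x: "x \<notin> W"
  shows "g *v x \<notin> W"
proof
  assume "g *v x \<in> W"
  then have "matrix_inv g *v (g *v x) \<in> W" using matrix_inv_image_subspace[OF g W gW] by blast
  with x show False by (simp add: matrix_inv_mult_vector(1)[OF g])
qed

definition dist_cocycle :: "(real^'n) set \<Rightarrow> real^'n^'n \<Rightarrow> real^'n \<Rightarrow> real" where
  "dist_cocycle U g x = ln (infdist (g *v x) U / infdist x U)"

definition log_distortion :: "real^'n^'n \<Rightarrow> real" where
  "log_distortion g = ln (max (onorm ((*v) g)) (onorm ((*v) (matrix_inv g))))"

lemma abs_ln_le_ln_max: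
  fixes r a b :: real
  assumes "0 < r" "r \<le> a" "inverse r \<le> b"
  shows "\<bar>ln r\<bar> \<le> ln (max a b)"
proof -
  have "ln r \<le> ln (max a b)" using assms by simp
  moreover have "- ln r \<le> ln (max a b)"
    using assms ln_inverse[of r] ln_le_cancel_iff[of "inverse r" "max a b"] by force
  ultimately show ?thesis by linarith
qed

lemma abs_dist_cocycle_le:
  fixes g :: "real^'n^'n"
  assumes g: "invertible g" and U: "subspace U" and gU: "(\<lambda>x. g *v x) ` U \<subseteq> U" and x: "x \<notin> U"
  shows "\<bar>dist_cocycle U g x\<bar> \<le> log_distortion g"
proof -
  have gx: "g *v x \<notin> U" by (rule matrix_vector_notin_invariant[OF g U gU x])
  have pos: "0 < infdist x U" "0 < infdist (g *v x) U"
    using infdist_pos_subspace[OF U] x gx by auto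
  have "infdist (g *v x) U \<le> onorm ((*v) g) * infdist x U"
    by (rule infdist_matrix_vector_le[OF U gU])
  moreover have "infdist (matrix_inv g *v (g *v x)) U \<le> onorm ((*v) (matrix_inv g)) * infdist (g *v x) U"
    by (rule infdist_matrix_vector_le[OF U matrix_inv_image_subspace[OF g U gU]])
  ultimately show ?thesis
    unfolding dist_cocycle_def log_distortion_def using pos matrix_inv_mult_vector(1)[OF g]
    by (intro abs_ln_le_ln_max) (simp_all add: field_simps)
qed

definition log_sin_angle :: "(real^'n) set \<Rightarrow> real^'n \<Rightarrow> real" where
  "log_sin_angle W x = ln (infdist x W / norm x)"

lemma dist_cocycle_diff:
  fixes g :: "real^'n^'n"
  assumes g: "invertible g" and W: "subspace W" and gW: "(\<lambda>x. g *v x) ` W \<subseteq> W" and x: "x \<notin> W"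
  shows "dist_cocycle W g x - dist_cocycle {0} g x = log_sin_angle W (g *v x) - log_sin_angle W x"
proof -
  have gx: "g *v x \<notin> W" by (rule matrix_vector_notin_invariant[OF g W gW x])
  have "0 < infdist x W" "0 < infdist (g *v x) W"
    using infdist_pos_subspace[OF W] x gx by blast+
  moreover have "0 < norm x" "0 < norm (g *v x)"
    using x gx subspace_0[OF W] by (metis zero_less_norm_iff)+
  ultimately show ?thesis
    unfolding dist_cocycle_def log_sin_angle_def by (simp add: ln_div)
qed

lemma dist_cocycle_scaleR_add:
  fixes g :: "real^'n^'n"
  assumes U: "subspace U" and gU: "(\<lambda>x. g *v x) ` U \<subseteq> U" and c: "c \<noteq> 0" and w: "w \<in> U"
  shows "dist_cocycle U g (c *\<^sub>R v + w) = dist_cocycle U g v"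
proof -
  have gw: "g *v w \<in> U" using gU w by auto
  have "g *v (c *\<^sub>R v + w) = c *\<^sub>R (g *v v) + g *v w"
    by (simp add: matrix_vector_right_distrib matrix_vector_mult_scaleR)
  then have "infdist (g *v (c *\<^sub>R v + w)) U = \<bar>c\<bar> * infdist (g *v v) U"
    by (simp only: infdist_add_subspace[OF U gw] infdist_scaleR_subspace[OF U])
  moreover have "infdist (c *\<^sub>R v + w) U = \<bar>c\<bar> * infdist v U"
    by (simp only: infdist_add_subspace[OF U w] infdist_scaleR_subspace[OF U])
  ultimately show ?thesis using c by (simp add: dist_cocycle_def)
qed

lemma log_sin_angle_scaleR:
  "subspace W \<Longrightarrow> t \<noteq> 0 \<Longrightarrow> log_sin_angle W (t *\<^sub>R x) = log_sin_angle W x"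
  by (simp add: log_sin_angle_def infdist_scaleR_subspace)


section \<open>Integrals of coboundaries\<close>

lemma integrable_pair_measure_fibrewise_bound:
  fixes h :: "'a \<times> 'b \<Rightarrow> real"
  assumes "prob_space M" "sigma_finite_measure N"
    and h: "h \<in> borel_measurable (M \<Otimes>\<^sub>M N)"
    and bound: "AE x in M. AE y in N. \<bar>h (x, y)\<bar> \<le> D y"
    and D: "(\<integral>\<^sup>+y. ennreal (D y) \<partial>N) < \<infinity>"
  shows "integrable (M \<Otimes>\<^sub>M N) h"
proof (rule integrableI_bounded[OF h])
  interpret M: prob_space M by fact
  interpret N: sigma_finite_measure N by fact
  interpret pair_sigma_finite M N ..
  have "(\<integral>\<^sup>+p. ennreal (norm (h p)) \<partial>(M \<Otimes>\<^sub>M N)) = (\<integral>\<^sup>+x. \<integral>\<^sup>+y. ennreal \<bar>h (x, y)\<bar> \<partial>N \<partial>M)"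
    using N.nn_integral_fst[of "\<lambda>p. ennreal \<bar>h p\<bar>" M] h by simp
  also have "\<dots> \<le> (\<integral>\<^sup>+x. \<integral>\<^sup>+y. ennreal (D y) \<partial>N \<partial>M)"
    using bound by (intro nn_integral_mono_AE) (auto elim!: eventually_mono intro!: nn_integral_mono_AE ennreal_leI)
  also have "\<dots> < \<infinity>" using D by (simp add: M.emeasure_space_1)
  finally show "(\<integral>\<^sup>+p. ennreal (norm (h p)) \<partial>(M \<Otimes>\<^sub>M N)) < \<infinity>" .
qed

lemma integral_pair_bounded_coboundary_eq_0:
  fixes F :: "'a \<Rightarrow> real" and a :: "'b \<Rightarrow> 'a \<Rightarrow> 'a"
  assumes "prob_space M" "prob_space N"
    and a: "(\<lambda>(x, g). a g x) \<in> measurable (M \<Otimes>\<^sub>M N) M"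
    and F: "F \<in> borel_measurable M" and bound: "\<And>x. \<bar>F x\<bar> \<le> B"
    and stationary: "(\<integral>x. F x \<partial>M) = (\<integral>x. \<integral>g. F (a g x) \<partial>N \<partial>M)"
  shows "(\<integral>p. F (a (snd p) (fst p)) - F (fst p) \<partial>(M \<Otimes>\<^sub>M N)) = 0"
proof -
  interpret M: prob_space M by fact
  interpret N: prob_space N by fact
  interpret pair_sigma_finite M N ..
  interpret P: prob_space "M \<Otimes>\<^sub>M N" by (rule prob_space_pair) unfold_locales
  have Fa: "(\<lambda>p. F (a (snd p) (fst p))) \<in> borel_measurable (M \<Otimes>\<^sub>M N)"
    using measurable_compose[OF a F] by (simp add: case_prod_beta')
  have int_Fa: "integrable (M \<Otimes>\<^sub>M N) (\<lambda>p. F (a (snd p) (fst p)))"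
    using Fa bound by (intro P.integrable_const_bound[where B=B]) auto
  have int_F: "integrable (M \<Otimes>\<^sub>M N) (\<lambda>p. F (fst p))"
    using measurable_compose[OF measurable_fst F] bound by (intro P.integrable_const_bound[where B=B]) auto
  have "(\<integral>p. F (a (snd p) (fst p)) \<partial>(M \<Otimes>\<^sub>M N)) = (\<integral>x. \<integral>g. F (a g x) \<partial>N \<partial>M)"
    using integral_fst'[OF int_Fa] by simp
  moreover have "(\<integral>p. F (fst p) \<partial>(M \<Otimes>\<^sub>M N)) = (\<integral>x. F x \<partial>M)"
    using integral_fst'[OF int_F] by (simp add: N.prob_space)
  ultimately show ?thesis using stationary int_Fa int_F by simp
qed

text \<open>Stationarity is only assumed for bounded test functions, hence the truncations of \<open>f\<close>.\<close>

lemma integral_coboundary_eq_0: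
  fixes f :: "'a \<Rightarrow> real" and a :: "'b \<Rightarrow> 'a \<Rightarrow> 'a"
  assumes M: "prob_space M" and N: "prob_space N"
    and a: "(\<lambda>(x, g). a g x) \<in> measurable (M \<Otimes>\<^sub>M N) M"
    and f: "f \<in> borel_measurable M"
    and stationary: "\<And>k::nat. (\<integral>x. max (- real k) (min (real k) (f x)) \<partial>M) =
      (\<integral>x. \<integral>g. max (- real k) (min (real k) (f (a g x))) \<partial>N \<partial>M)"
    and int: "integrable (M \<Otimes>\<^sub>M N) (\<lambda>(x, g). f (a g x) - f x)"
  shows "(\<integral>x. \<integral>g. f (a g x) - f x \<partial>N \<partial>M) = 0"
proof -
  interpret pair_sigma_finite M N
    using M N by (intro pair_sigma_finite.intro prob_space_imp_sigma_finite)
  define t :: "nat \<Rightarrow> real \<Rightarrow> real" where "t k y = max (- real k) (min (real k) y)" for k y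
  have fa: "(\<lambda>p. f (a (snd p) (fst p))) \<in> borel_measurable (M \<Otimes>\<^sub>M N)"
    using measurable_compose[OF a f] by (simp add: case_prod_beta')
  have ffst: "(\<lambda>p. f (fst p)) \<in> borel_measurable (M \<Otimes>\<^sub>M N)"
    by (rule measurable_compose[OF measurable_fst f])
  have "(\<lambda>k. \<integral>p. t k (f (a (snd p) (fst p))) - t k (f (fst p)) \<partial>(M \<Otimes>\<^sub>M N))
      \<longlonglongrightarrow> (\<integral>p. f (a (snd p) (fst p)) - f (fst p) \<partial>(M \<Otimes>\<^sub>M N))"
  proof (rule integral_dominated_convergence[where w="\<lambda>p. \<bar>f (a (snd p) (fst p)) - f (fst p)\<bar>"])
    have "(\<lambda>k. t k y) \<longlonglongrightarrow> y" for y
    proof (rule tendsto_eventually)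
      obtain K where "\<bar>y\<bar> \<le> real K" using real_arch_simple by blast
      then show "\<forall>\<^sub>F k in sequentially. t k y = y"
        unfolding eventually_sequentially t_def by (intro exI[of _ K]) auto
    qed
    then show "AE p in M \<Otimes>\<^sub>M N. (\<lambda>k. t k (f (a (snd p) (fst p))) - t k (f (fst p)))
        \<longlonglongrightarrow> f (a (snd p) (fst p)) - f (fst p)"
      by (intro AE_I2 tendsto_diff)
    show "AE p in M \<Otimes>\<^sub>M N. norm (t k (f (a (snd p) (fst p))) - t k (f (fst p))) \<le>
        \<bar>f (a (snd p) (fst p)) - f (fst p)\<bar>" for k
    proof (intro AE_I2)
      have "\<bar>t k y - t k z\<bar> \<le> \<bar>y - z\<bar>" for y z unfolding t_def by linarith
      then show "norm (t k (f (a (snd p) (fst p))) - t k (f (fst p))) \<le> \<bar>f (a (snd p) (fst p)) - f (fst p)\<bar>"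
        for p by simp
    qed
    show "integrable (M \<Otimes>\<^sub>M N) (\<lambda>p. \<bar>f (a (snd p) (fst p)) - f (fst p)\<bar>)"
      using integrable_abs[OF int] by (simp add: case_prod_beta')
  qed (unfold t_def, use fa ffst in measurable)+
  moreover have "(\<integral>p. t k (f (a (snd p) (fst p))) - t k (f (fst p)) \<partial>(M \<Otimes>\<^sub>M N)) = 0" for k
    by (rule integral_pair_bounded_coboundary_eq_0[OF M N a, where B="real k"])
       (use f stationary in \<open>simp_all add: t_def\<close>)
  ultimately have "(\<integral>p. f (a (snd p) (fst p)) - f (fst p) \<partial>(M \<Otimes>\<^sub>M N)) = 0"
    by (simp add: LIMSEQ_const_iff)
  then show ?thesis using integral_fst'[OF int] by (simp add: case_prod_beta')
qed

section \<open>Stationary measures on lines, seen on vectors\<close>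

lemma borel_measurable_matrix_vector_mult [measurable (raw)]:
  fixes f :: "'a \<Rightarrow> real^'n^'m" and g :: "'a \<Rightarrow> real^'n"
  assumes "f \<in> borel_measurable M" "g \<in> borel_measurable M"
  shows "(\<lambda>x. f x *v g x) \<in> borel_measurable M"
proof -
  have "continuous_on UNIV (\<lambda>p::(real^'n^'m) \<times> (real^'n). fst p *v snd p)"
    unfolding matrix_vector_mult_def by (intro continuous_intros)
  then show ?thesis by (rule borel_measurable_continuous_Pair[OF assms])
qed

lemma borel_measurable_infdist [measurable (raw)]:
  "f \<in> borel_measurable M \<Longrightarrow> (\<lambda>x. infdist (f x) A) \<in> borel_measurable M"
  by (rule borel_measurable_continuous_on[where f="\<lambda>x. infdist x A"]) (intro continuous_intros, simp)

lemma AE_in_supp: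
  fixes \<mu> :: "(real^'n^'n) measure"
  assumes sets: "sets \<mu> = sets borel" and GL: "AE g in \<mu>. g \<in> GL"
  shows "AE g in \<mu>. g \<in> supp \<mu>"
proof -
  define F where "F = {U::(real^'n^'n) set. open U \<and> emeasure \<mu> U = 0}"
  obtain F' where F': "F' \<subseteq> F" "countable F'" "\<Union>F' = \<Union>F"
    using Lindelof[of F] unfolding F_def by auto
  have "(\<Union>U\<in>F'. U) \<in> null_sets \<mu>"
    using F' sets by (intro null_sets_UN') (auto simp: F_def null_sets_def)
  then have "AE g in \<mu>. g \<notin> \<Union>F" using F'(3) by (intro AE_I'[of "\<Union>F'"]) auto
  with GL show ?thesis
    by eventually_elim (auto simp: supp_def F_def zero_less_iff_neq_zero)
qed

lemma supp_subset_Gamma: "supp \<mu> \<subseteq> Gamma \<mu>"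
  unfolding Gamma_def by blast

lemma AE_invertible_invariant:
  fixes \<mu> :: "(real^'n^'n) measure"
  assumes "sets \<mu> = sets borel" and GL: "AE g in \<mu>. g \<in> GL"
    and inv: "\<forall>g\<in>Gamma \<mu>. (\<lambda>x. g *v x) ` W \<subseteq> W"
  shows "AE g in \<mu>. invertible g \<and> (\<lambda>x. g *v x) ` W \<subseteq> W"
  using AE_in_supp[OF assms(1) GL] GL
proof eventually_elim
  case (elim g)
  then have "g \<in> Gamma \<mu>" using supp_subset_Gamma by blast
  with inv elim(2) show ?case by (simp add: GL_def)
qed

lemma space_stationary: "stationary \<mu> W \<eta> \<Longrightarrow> space \<eta> = proj_pts W"
  unfolding stationary_def by (metis sets_eq_imp_space_eq space_proj_space)

lemma prob_space_distr_line_rep: "stationary \<mu> {0} \<nu> \<Longrightarrow> prob_space (distr \<nu> borel line_rep)"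
  using measurable_line_rep
  by (intro prob_space.prob_space_distr) (auto simp: stationary_def cong: measurable_cong_sets)

lemma act_span_singleton: "act g (span {v}) = span {g *v v}"
  unfolding act_def by (subst span_linear_image[symmetric]) simp_all

lemma line_rep_act:
  fixes g :: "real^'n^'n"
  assumes g: "invertible g" and L: "L \<in> proj_pts {0}"
  shows "act g L \<in> proj_pts {0}" "line_rep (act g L) = pivot_normalize (g *v line_rep L)"
proof -
  have u: "line_rep L \<noteq> 0" "L = span {line_rep L}" using line_rep_proj_pts[OF L] by auto
  have act: "act g L = span {g *v line_rep L}" using act_span_singleton u(2) by metis
  have "g *v line_rep L \<noteq> 0" using matrix_inv_mult_vector(1)[OF g, of "line_rep L"] u(1) by force
  then show "act g L \<in> proj_pts {0}" "line_rep (act g L) = pivot_normalize (g *v line_rep L)"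
    unfolding act proj_pts_zero by (blast, rule line_rep_span)
qed

lemma emeasure_distr_line_rep_stationary:
  fixes \<mu> :: "(real^'n^'n) measure" and \<nu> :: "(real^'n) set measure"
  assumes GL: "AE g in \<mu>. invertible g" and st: "stationary \<mu> {0} \<nu>" and B: "B \<in> sets borel"
  shows "emeasure (distr \<nu> borel line_rep) B =
    (\<integral>\<^sup>+g. emeasure (distr \<nu> borel line_rep) {x. pivot_normalize (g *v x) \<in> B} \<partial>\<mu>)"
proof -
  have sets_\<nu>: "sets \<nu> = sets (proj_space {0})" using st by (simp add: stationary_def)
  have rep_meas: "line_rep \<in> borel_measurable \<nu>"
    using measurable_line_rep by (simp add: measurable_cong_sets[OF sets_\<nu> refl])
  have meas_g: "{x. pivot_normalize (g *v x) \<in> B} \<in> sets borel" for g :: "real^'n^'n"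
    using B by measurable
  have act_vimage: "act g -` (line_rep -` B \<inter> space \<nu>) \<inter> space \<nu> =
      line_rep -` {x. pivot_normalize (g *v x) \<in> B} \<inter> space \<nu>" if "invertible g" for g
    using line_rep_act[OF that] by (auto simp: space_stationary[OF st])
  have "emeasure (distr \<nu> borel line_rep) B = emeasure \<nu> (line_rep -` B \<inter> space \<nu>)"
    by (rule emeasure_distr[OF rep_meas B])
  also have "\<dots> = (\<integral>\<^sup>+g. emeasure \<nu> (act g -` (line_rep -` B \<inter> space \<nu>) \<inter> space \<nu>) \<partial>\<mu>)"
    using st measurable_sets[OF rep_meas B] unfolding stationary_def by simp
  also have "\<dots> = (\<integral>\<^sup>+g. emeasure (distr \<nu> borel line_rep) {x. pivot_normalize (g *v x) \<in> B} \<partial>\<mu>)"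
  proof (rule nn_integral_cong_AE)
    show "AE g in \<mu>. emeasure \<nu> (act g -` (line_rep -` B \<inter> space \<nu>) \<inter> space \<nu>) =
        emeasure (distr \<nu> borel line_rep) {x. pivot_normalize (g *v x) \<in> B}"
      using GL by eventually_elim (metis act_vimage emeasure_distr[OF rep_meas meas_g])
  qed
  finally show ?thesis .
qed

lemma distr_line_rep_stationary:
  fixes \<mu> :: "(real^'n^'n) measure" and \<nu> :: "(real^'n) set measure"
  assumes "prob_space \<mu>" and sets_\<mu> [measurable_cong]: "sets \<mu> = sets borel"
    and GL: "AE g in \<mu>. invertible g" and st: "stationary \<mu> {0} \<nu>"
  defines "n \<equiv> distr \<nu> borel line_rep"
  shows "n = distr (n \<Otimes>\<^sub>M \<mu>) borel (\<lambda>(x, g). pivot_normalize (g *v x))"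
proof (rule measure_eqI)
  interpret n: prob_space n unfolding n_def by (rule prob_space_distr_line_rep[OF st])
  interpret \<mu>: prob_space \<mu> by fact
  interpret pair_sigma_finite n \<mu> ..
  fix B :: "(real^'n) set" assume "B \<in> sets n"
  then have B [measurable]: "B \<in> sets borel" by (simp add: n_def)
  have slice: "(\<lambda>x. (x, g)) -` ((\<lambda>(x, g). pivot_normalize (g *v x)) -` B \<inter> space (n \<Otimes>\<^sub>M \<mu>)) =
      {x. pivot_normalize (g *v x) \<in> B}" if "g \<in> space \<mu>" for g
    using that by (auto simp: space_pair_measure n_def)
  have "emeasure n B = (\<integral>\<^sup>+g. emeasure n {x. pivot_normalize (g *v x) \<in> B} \<partial>\<mu>)"
    unfolding n_def by (rule emeasure_distr_line_rep_stationary[OF GL st B])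
  also have "\<dots> = (\<integral>\<^sup>+g. emeasure n ((\<lambda>x. (x, g)) -` ((\<lambda>(x, g). pivot_normalize (g *v x)) -` B \<inter> space (n \<Otimes>\<^sub>M \<mu>))) \<partial>\<mu>)"
    by (intro nn_integral_cong arg_cong[where f="emeasure n"] slice[symmetric])
  also have "\<dots> = emeasure (n \<Otimes>\<^sub>M \<mu>) ((\<lambda>(x, g). pivot_normalize (g *v x)) -` B \<inter> space (n \<Otimes>\<^sub>M \<mu>))"
    by (rule emeasure_pair_measure_alt2[symmetric], rule measurable_sets[OF _ B]) (simp add: n_def)
  also have "\<dots> = emeasure (distr (n \<Otimes>\<^sub>M \<mu>) borel (\<lambda>(x, g). pivot_normalize (g *v x))) B"
    by (rule emeasure_distr[symmetric]) (simp_all add: n_def)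
  finally show "emeasure n B = emeasure (distr (n \<Otimes>\<^sub>M \<mu>) borel (\<lambda>(x, g). pivot_normalize (g *v x))) B" .
qed (simp add: n_def)

lemma integral_distr_line_rep_stationary:
  fixes \<mu> :: "(real^'n^'n) measure" and \<nu> :: "(real^'n) set measure" and h :: "real^'n \<Rightarrow> real"
  assumes \<mu>: "prob_space \<mu>" and sets_\<mu> [measurable_cong]: "sets \<mu> = sets borel"
    and GL: "AE g in \<mu>. invertible g" and st: "stationary \<mu> {0} \<nu>"
    and h [measurable]: "h \<in> borel_measurable borel" and bound: "\<And>x. \<bar>h x\<bar> \<le> K"
    and hom: "\<And>t x. t \<noteq> 0 \<Longrightarrow> h (t *\<^sub>R x) = h x"
  defines "n \<equiv> distr \<nu> borel line_rep"
  shows "(\<integral>x. h x \<partial>n) = (\<integral>x. \<integral>g. h (g *v x) \<partial>\<mu> \<partial>n)"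
proof -
  interpret \<mu>: prob_space \<mu> by fact
  interpret n: prob_space n unfolding n_def by (rule prob_space_distr_line_rep[OF st])
  interpret pair_sigma_finite n \<mu> ..
  interpret P: prob_space "n \<Otimes>\<^sub>M \<mu>" by (rule prob_space_pair) unfold_locales
  have sets_n [measurable_cong]: "sets n = sets borel" by (simp add: n_def)
  have h_pivot: "h (pivot_normalize y) = h y" for y
    by (cases "y = 0") (simp_all add: pivot_normalize_def hom pivot_inv_nonzero)
  have "(\<integral>x. h x \<partial>n) = (\<integral>x. h x \<partial>distr (n \<Otimes>\<^sub>M \<mu>) borel (\<lambda>(x, g). pivot_normalize (g *v x)))"
    using distr_line_rep_stationary[OF \<mu> sets_\<mu> GL st] by (simp add: n_def)
  also have "\<dots> = (\<integral>p. h (snd p *v fst p) \<partial>(n \<Otimes>\<^sub>M \<mu>))"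
    by (subst integral_distr) (simp_all add: h_pivot case_prod_beta)
  also have "\<dots> = (\<integral>x. \<integral>g. h (g *v x) \<partial>\<mu> \<partial>n)"
    using bound by (subst integral_fst'[symmetric]) (auto intro!: P.integrable_const_bound[where B=K])
  finally show ?thesis .
qed

section \<open>The exponents as integrals over vectors\<close>

lemma alpha_distr_proj_class:
  fixes \<mu> :: "(real^'n^'n) measure" and n :: "(real^'n) measure"
  assumes "prob_space \<mu>" and [measurable_cong]: "sets \<mu> = sets borel" and sets_n: "sets n = sets borel"
    and U: "subspace U" "U \<noteq> UNIV"
    and inv: "AE g in \<mu>. (\<lambda>x. g *v x) ` U \<subseteq> U" and notin: "AE x in n. x \<notin> U"
  shows "alpha \<mu> U (distr n (proj_space U) (proj_class U)) = (\<integral>x. \<integral>g. dist_cocycle U g x \<partial>\<mu> \<partial>n)"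
proof -
  interpret prob_space \<mu> by fact
  define \<Phi> where "\<Phi> x = (\<integral>g. dist_cocycle U g x \<partial>\<mu>)" for x
  have cocycle_meas: "(\<lambda>g. dist_cocycle U g x) \<in> borel_measurable \<mu>" for x
    unfolding dist_cocycle_def by measurable
  have \<Phi>_meas: "\<Phi> \<in> borel_measurable borel"
    unfolding \<Phi>_def dist_cocycle_def by measurable
  have \<Phi>_rep: "\<Phi> (rep U (span (insert v U))) = \<Phi> v" if v: "v \<notin> U" for v
  proof -
    obtain c w where cw: "c \<noteq> 0" "w \<in> U" "rep U (span (insert v U)) = c *\<^sub>R v + w"
      using rep_span_insert[OF U(1) v] .
    show ?thesis
      unfolding \<Phi>_def
    proof (rule integral_cong_AE)
      show "AE g in \<mu>. dist_cocycle U g (rep U (span (insert v U))) = dist_cocycle U g v"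
        using inv by eventually_elim (simp add: cw dist_cocycle_scaleR_add[OF U(1)])
    qed (rule cocycle_meas)+
  qed
  have F_meas: "(\<lambda>L. \<Phi> (rep U L)) \<in> borel_measurable (proj_space U)"
    by (rule borel_measurable_proj_spaceI[OF U(1) \<Phi>_meas \<Phi>_rep])
  have class_meas: "proj_class U \<in> measurable n (proj_space U)"
    using measurable_proj_class[OF U] by (simp add: measurable_cong_sets[OF sets_n refl])
  have "alpha \<mu> U (distr n (proj_space U) (proj_class U)) = (\<integral>x. \<Phi> (rep U (proj_class U x)) \<partial>n)"
    unfolding alpha_def \<Phi>_def[symmetric] dist_cocycle_def[symmetric] by (rule integral_distr[OF class_meas F_meas])
  also have "\<dots> = (\<integral>x. \<Phi> x \<partial>n)"
  proof (rule integral_cong_AE)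
    show "AE x in n. \<Phi> (rep U (proj_class U x)) = \<Phi> x"
      using notin by eventually_elim (simp add: proj_class_notin \<Phi>_rep)
    show "(\<lambda>x. \<Phi> (rep U (proj_class U x))) \<in> borel_measurable n"
      by (rule measurable_compose[OF class_meas F_meas])
    show "\<Phi> \<in> borel_measurable n" using \<Phi>_meas by (simp add: measurable_cong_sets[OF sets_n refl])
  qed
  finally show ?thesis by (simp add: \<Phi>_def)
qed

lemma integrable_dist_cocycle:
  fixes \<mu> :: "(real^'n^'n) measure" and n :: "(real^'n) measure"
  assumes n: "prob_space n" and \<mu>: "prob_space \<mu>"
    and [measurable_cong]: "sets n = sets borel" "sets \<mu> = sets borel"
    and U: "subspace U" and good: "AE g in \<mu>. invertible g \<and> (\<lambda>x. g *v x) ` U \<subseteq> U"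
    and fin: "(\<integral>\<^sup>+g. ennreal (log_distortion g) \<partial>\<mu>) < \<infinity>" and notin: "AE x in n. x \<notin> U"
  shows "integrable (n \<Otimes>\<^sub>M \<mu>) (\<lambda>p. dist_cocycle U (snd p) (fst p))"
proof (rule integrable_pair_measure_fibrewise_bound[OF n prob_space_imp_sigma_finite[OF \<mu>] _ _ fin])
  show "(\<lambda>p. dist_cocycle U (snd p) (fst p)) \<in> borel_measurable (n \<Otimes>\<^sub>M \<mu>)"
    unfolding dist_cocycle_def by measurable
  show "AE x in n. AE g in \<mu>. \<bar>dist_cocycle U (snd (x, g)) (fst (x, g))\<bar> \<le> log_distortion g"
    using notin
  proof eventually_elim
    case (elim x)
    from good show ?case by eventually_elim (simp add: abs_dist_cocycle_le[OF _ U _ elim])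
  qed
qed

lemma AE_dist_cocycle_diff:
  fixes \<mu> :: "(real^'n^'n) measure" and n :: "(real^'n) measure"
  assumes "prob_space n" "prob_space \<mu>"
    and [measurable_cong]: "sets n = sets borel" "sets \<mu> = sets borel"
    and W: "subspace W" and good: "AE g in \<mu>. invertible g \<and> (\<lambda>x. g *v x) ` W \<subseteq> W"
    and notin: "AE x in n. x \<notin> W"
  shows "AE p in n \<Otimes>\<^sub>M \<mu>. dist_cocycle W (snd p) (fst p) - dist_cocycle {0} (snd p) (fst p) =
      log_sin_angle W (snd p *v fst p) - log_sin_angle W (fst p)"
proof -
  interpret pair_sigma_finite n \<mu>
    using assms(1,2) by (intro pair_sigma_finite.intro prob_space_imp_sigma_finite)
  show ?thesis
  proof (rule AE_pair_measure)
    show "{p \<in> space (n \<Otimes>\<^sub>M \<mu>). dist_cocycle W (snd p) (fst p) - dist_cocycle {0} (snd p) (fst p) =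
        log_sin_angle W (snd p *v fst p) - log_sin_angle W (fst p)} \<in> sets (n \<Otimes>\<^sub>M \<mu>)"
      unfolding dist_cocycle_def log_sin_angle_def by measurable
    show "AE x in n. AE g in \<mu>. dist_cocycle W (snd (x, g)) (fst (x, g)) - dist_cocycle {0} (snd (x, g)) (fst (x, g)) =
        log_sin_angle W (snd (x, g) *v fst (x, g)) - log_sin_angle W (fst (x, g))"
      using notin
    proof eventually_elim
      case (elim x)
      from good show ?case by eventually_elim (simp add: dist_cocycle_diff[OF _ W _ elim])
    qed
  qed
qed


lemma integral_dist_cocycle_eq:
  fixes \<mu> :: "(real^'n^'n) measure" and n :: "(real^'n) measure"
  assumes \<mu>: "prob_space \<mu>" and sets_\<mu> [measurable_cong]: "sets \<mu> = sets borel"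
    and n: "prob_space n" and sets_n [measurable_cong]: "sets n = sets borel"
    and W: "subspace W" and good: "AE g in \<mu>. invertible g \<and> (\<lambda>x. g *v x) ` W \<subseteq> W"
    and fin: "(\<integral>\<^sup>+g. ennreal (log_distortion g) \<partial>\<mu>) < \<infinity>"
    and notin: "AE x in n. x \<notin> W"
    and stationary: "\<And>(h :: real^'n \<Rightarrow> real) K. h \<in> borel_measurable borel \<Longrightarrow> (\<And>x. \<bar>h x\<bar> \<le> K) \<Longrightarrow>
      (\<And>t x. t \<noteq> 0 \<Longrightarrow> h (t *\<^sub>R x) = h x) \<Longrightarrow> (\<integral>x. h x \<partial>n) = (\<integral>x. \<integral>g. h (g *v x) \<partial>\<mu> \<partial>n)"
  shows "(\<integral>x. \<integral>g. dist_cocycle W g x \<partial>\<mu> \<partial>n) = (\<integral>x. \<integral>g. dist_cocycle {0} g x \<partial>\<mu> \<partial>n)"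
proof -
  interpret pair_sigma_finite n \<mu>
    using n \<mu> by (intro pair_sigma_finite.intro prob_space_imp_sigma_finite)
  let ?\<sigma> = "\<lambda>U p. dist_cocycle U (snd p) (fst p)"
  let ?\<Delta> = "\<lambda>p. log_sin_angle W (snd p *v fst p) - log_sin_angle W (fst p)"
  have int_W: "integrable (n \<Otimes>\<^sub>M \<mu>) (?\<sigma> W)"
    by (rule integrable_dist_cocycle[OF n \<mu> sets_n sets_\<mu> W good fin notin])
  have int_0: "integrable (n \<Otimes>\<^sub>M \<mu>) (?\<sigma> {0})"
    using good notin subspace_0[OF W]
    by (intro integrable_dist_cocycle[OF n \<mu> sets_n sets_\<mu> subspace_single_0 _ fin])
       (auto elim: eventually_mono)
  have diff: "AE p in n \<Otimes>\<^sub>M \<mu>. ?\<sigma> W p - ?\<sigma> {0} p = ?\<Delta> p"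
    by (rule AE_dist_cocycle_diff[OF n \<mu> sets_n sets_\<mu> W good notin])
  have \<sigma>_diff_meas: "(\<lambda>p. ?\<sigma> W p - ?\<sigma> {0} p) \<in> borel_measurable (n \<Otimes>\<^sub>M \<mu>)"
    using int_W int_0 by auto
  have \<Delta>_meas: "?\<Delta> \<in> borel_measurable (n \<Otimes>\<^sub>M \<mu>)"
    unfolding log_sin_angle_def by measurable
  have int_\<Delta>: "integrable (n \<Otimes>\<^sub>M \<mu>) ?\<Delta>"
    using integrable_cong_AE[OF \<sigma>_diff_meas \<Delta>_meas diff] int_W int_0 by simp
  have "(\<integral>x. \<integral>g. dist_cocycle W g x \<partial>\<mu> \<partial>n) - (\<integral>x. \<integral>g. dist_cocycle {0} g x \<partial>\<mu> \<partial>n)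
      = (\<integral>p. ?\<sigma> W p - ?\<sigma> {0} p \<partial>(n \<Otimes>\<^sub>M \<mu>))"
    using integral_fst'[OF int_W] integral_fst'[OF int_0] int_W int_0 by simp
  also have "\<dots> = (\<integral>x. \<integral>g. log_sin_angle W (g *v x) - log_sin_angle W x \<partial>\<mu> \<partial>n)"
    using integral_cong_AE[OF \<sigma>_diff_meas \<Delta>_meas diff] integral_fst'[OF int_\<Delta>] by simp
  also have "\<dots> = 0"
  proof (rule integral_coboundary_eq_0[OF n \<mu>])
    show "(\<lambda>(x, g). g *v x) \<in> measurable (n \<Otimes>\<^sub>M \<mu>) n" by measurable
    show "log_sin_angle W \<in> borel_measurable n" unfolding log_sin_angle_def by measurable
    show "integrable (n \<Otimes>\<^sub>M \<mu>) (\<lambda>(x, g). log_sin_angle W (g *v x) - log_sin_angle W x)"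
      using int_\<Delta> by (simp add: case_prod_beta')
    show "(\<integral>x. max (- real k) (min (real k) (log_sin_angle W x)) \<partial>n) =
        (\<integral>x. \<integral>g. max (- real k) (min (real k) (log_sin_angle W (g *v x))) \<partial>\<mu> \<partial>n)" for k
    proof (rule stationary[where K="real k"])
      show "(\<lambda>x. max (- real k) (min (real k) (log_sin_angle W x))) \<in> borel_measurable borel"
        unfolding log_sin_angle_def by measurable
    qed (auto simp: log_sin_angle_scaleR[OF W])
  qed
  finally show ?thesis by simp
qed

lemma line_rep_in_subspace_iff:
  "subspace W \<Longrightarrow> L \<in> proj_pts {0} \<Longrightarrow> line_rep L \<in> W \<longleftrightarrow> L \<subseteq> W"
  by (metis line_rep_proj_pts(2) span_singleton_subset_subspace)

lemma singleton_zero_neq_UNIV: "{0} \<noteq> (UNIV :: (real^'n) set)"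
  by (metis UNIV_I singletonD zero_neq_one)

lemma distr_line_rep_proj_class_zero:
  assumes sets_\<nu>: "sets \<nu> = sets (proj_space {0})"
  shows "distr (distr \<nu> borel line_rep) (proj_space {0}) (proj_class {0}) = \<nu>"
proof -
  have space_\<nu>: "space \<nu> = proj_pts {0}" using sets_eq_imp_space_eq[OF sets_\<nu>] by simp
  have rep_meas: "line_rep \<in> borel_measurable \<nu>"
    using measurable_line_rep by (simp add: measurable_cong_sets[OF sets_\<nu> refl])
  have "distr (distr \<nu> borel line_rep) (proj_space {0}) (proj_class {0}) =
      distr \<nu> (proj_space {0}) (\<lambda>L. proj_class {0} (line_rep L))"
    using distr_distr[OF measurable_proj_class[OF subspace_single_0 singleton_zero_neq_UNIV] rep_meas]
    by (simp add: comp_def)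
  also have "\<dots> = distr \<nu> (proj_space {0}) (\<lambda>L. L)"
    by (intro distr_cong refl)
       (simp add: space_\<nu> proj_class_notin line_rep_proj_pts span_insert_zero)
  also have "\<dots> = \<nu>" by (rule distr_id2[OF sets_\<nu>[symmetric]])
  finally show ?thesis .
qed

lemma null_sets_lines_in_subspace:
  assumes sets_\<nu>: "sets \<nu> = sets (proj_space {0})" and W: "subspace W"
    and null: "emeasure \<nu> {L \<in> space \<nu>. L \<subseteq> W} = 0"
  shows "{L \<in> space \<nu>. L \<subseteq> W} = line_rep -` W \<inter> space \<nu>"
    "{L \<in> space \<nu>. L \<subseteq> W} \<in> null_sets \<nu>"
proof -
  have space_\<nu>: "space \<nu> = proj_pts {0}" using sets_eq_imp_space_eq[OF sets_\<nu>] by simp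
  show eq: "{L \<in> space \<nu>. L \<subseteq> W} = line_rep -` W \<inter> space \<nu>"
    using line_rep_in_subspace_iff[OF W] by (auto simp: space_\<nu>)
  have "line_rep -` W \<inter> space \<nu> \<in> sets \<nu>"
    using measurable_line_rep subspace_in_borel[OF W]
    by (intro measurable_sets[of line_rep \<nu> borel]) (simp_all add: measurable_cong_sets[OF sets_\<nu> refl])
  with null show "{L \<in> space \<nu>. L \<subseteq> W} \<in> null_sets \<nu>" by (simp add: eq null_setsI)
qed

lemma AE_distr_line_rep_notin:
  assumes sets_\<nu>: "sets \<nu> = sets (proj_space {0})" and W: "subspace W"
    and null: "emeasure \<nu> {L \<in> space \<nu>. L \<subseteq> W} = 0"
  shows "AE x in distr \<nu> borel line_rep. x \<notin> W"
proof (rule AE_I')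
  have rep_meas: "line_rep \<in> borel_measurable \<nu>"
    using measurable_line_rep by (simp add: measurable_cong_sets[OF sets_\<nu> refl])
  show "W \<in> null_sets (distr \<nu> borel line_rep)"
    using null_sets_lines_in_subspace[OF assms] subspace_in_borel[OF W]
    by (simp add: null_sets_distr_iff[OF rep_meas])
qed auto

lemma proj_class_line_rep:
  assumes W: "subspace W" and L: "L \<in> proj_pts {0}" "\<not> L \<subseteq> W"
  shows "proj_class W (line_rep L) = span (L \<union> W)"
proof -
  have "line_rep L \<notin> W" using L line_rep_in_subspace_iff[OF W L(1)] by simp
  then have "proj_class W (line_rep L) = span (span {line_rep L} \<union> W)"
    by (simp add: proj_class_notin span_Un_span_singleton[OF W])
  then show ?thesis by (simp add: line_rep_proj_pts(2)[OF L(1)])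
qed

lemma distr_line_rep_proj_class:
  assumes sets_\<nu>: "sets \<nu> = sets (proj_space {0})" and sets_\<eta>: "sets \<eta> = sets (proj_space W)"
    and W: "subspace W" "W \<noteq> UNIV"
    and null: "emeasure \<nu> {L \<in> space \<nu>. L \<subseteq> W} = 0"
    and proj: "\<forall>A\<in>sets \<eta>. emeasure \<eta> A = emeasure \<nu> ((\<lambda>L. span (L \<union> W)) -` A \<inter> space \<nu>)"
  shows "distr (distr \<nu> borel line_rep) (proj_space W) (proj_class W) = \<eta>"
proof (rule measure_eqI)
  have space_\<nu>: "space \<nu> = proj_pts {0}" using sets_eq_imp_space_eq[OF sets_\<nu>] by simp
  have rep_meas: "line_rep \<in> borel_measurable \<nu>"
    using measurable_line_rep by (simp add: measurable_cong_sets[OF sets_\<nu> refl])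
  have comp_meas: "(\<lambda>L. proj_class W (line_rep L)) \<in> measurable \<nu> (proj_space W)"
    using measurable_compose[OF rep_meas measurable_proj_class[OF W]] .
  define Z where "Z = {L \<in> space \<nu>. L \<subseteq> W}"
  have Z: "Z \<in> null_sets \<nu>" unfolding Z_def by (rule null_sets_lines_in_subspace[OF sets_\<nu> W(1) null])
  fix A assume "A \<in> sets (distr (distr \<nu> borel line_rep) (proj_space W) (proj_class W))"
  then have A: "A \<in> sets (proj_space W)" by simp
  then have A_sub: "A \<subseteq> proj_pts W" using sets.sets_into_space by fastforce
  have "emeasure (distr (distr \<nu> borel line_rep) (proj_space W) (proj_class W)) A =
      emeasure \<nu> ((\<lambda>L. proj_class W (line_rep L)) -` A \<inter> space \<nu>)"
    using distr_distr[OF measurable_proj_class[OF W] rep_meas] emeasure_distr[OF comp_meas A]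
    by (simp add: comp_def)
  also have "\<dots> = emeasure \<nu> (((\<lambda>L. proj_class W (line_rep L)) -` A \<inter> space \<nu>) - Z)"
    using measurable_sets[OF comp_meas A] Z by (rule emeasure_Diff_null_set[symmetric, rotated])
  also have "((\<lambda>L. proj_class W (line_rep L)) -` A \<inter> space \<nu>) - Z = (\<lambda>L. span (L \<union> W)) -` A \<inter> space \<nu>"
  proof -
    have "span (L \<union> W) = W" if "L \<in> Z" for L
      using that W(1) by (simp add: Z_def Un_absorb1)
    then have "span (L \<union> W) \<notin> A" if "L \<in> Z" for L
      using that A_sub subspace_notin_proj_pts[OF W(1)] by auto
    moreover have "proj_class W (line_rep L) = span (L \<union> W)" if "L \<in> space \<nu>" "L \<notin> Z" for L
      using that proj_class_line_rep[OF W(1)] by (simp add: Z_def space_\<nu>)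
    ultimately show ?thesis by blast
  qed
  also have "emeasure \<nu> \<dots> = emeasure \<eta> A" using proj A sets_\<eta> by simp
  finally show "emeasure (distr (distr \<nu> borel line_rep) (proj_space W) (proj_class W)) A = emeasure \<eta> A" .
qed (simp add: sets_\<eta>)

theorem lemma4p3:
  fixes \<mu> :: "(real^'n^'n) measure" and W :: "(real^'n) set"
    and \<nu> nubar :: "(real^'n) set measure"
  assumes "prob_space \<mu>" and "sets \<mu> = sets borel" and "AE g in \<mu>. g \<in> GL"
    and "(\<integral>\<^sup>+ g. ennreal (ln (max (onorm ((*v) g)) (onorm ((*v) (matrix_inv g))))) \<partial>\<mu>) < \<infinity>"
    and "subspace W" and "\<forall>g\<in>Gamma \<mu>. (\<lambda>x. g *v x) ` W \<subseteq> W"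
    and "ergodic \<mu> W nubar"
    and "stationary \<mu> {0} \<nu>"
    and "emeasure \<nu> {L \<in> space \<nu>. L \<subseteq> W} = 0"
    and "\<forall>A\<in>sets nubar. emeasure nubar A = emeasure \<nu> ((\<lambda>L. span (L \<union> W)) -` A \<inter> space \<nu>)"
  shows "alpha \<mu> W nubar = alpha \<mu> {0} \<nu>"
proof -
  note \<mu> = assms(1,2) and W = assms(5) and st = assms(8) and null = assms(9)
  let ?n = "distr \<nu> borel line_rep"
  have good: "AE g in \<mu>. invertible g \<and> (\<lambda>x. g *v x) ` W \<subseteq> W"
    by (rule AE_invertible_invariant[OF assms(2,3,6)])
  have sets_\<nu>: "sets \<nu> = sets (proj_space {0})" and sets_nubar: "sets nubar = sets (proj_space W)"
    using st assms(7) by (simp_all add: ergodic_def stationary_def)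
  have "W \<noteq> UNIV" using null st by (auto simp: stationary_def prob_space.emeasure_space_1)
  have notin: "AE x in ?n. x \<notin> W" by (rule AE_distr_line_rep_notin[OF sets_\<nu> W null])
  have "alpha \<mu> W nubar = alpha \<mu> W (distr ?n (proj_space W) (proj_class W))"
    using distr_line_rep_proj_class[OF sets_\<nu> sets_nubar W \<open>W \<noteq> UNIV\<close> null assms(10)] by simp
  also have "\<dots> = (\<integral>x. \<integral>g. dist_cocycle W g x \<partial>\<mu> \<partial>?n)"
    using good by (intro alpha_distr_proj_class[OF \<mu> _ W \<open>W \<noteq> UNIV\<close> _ notin]) (auto elim: eventually_mono)
  also have "\<dots> = (\<integral>x. \<integral>g. dist_cocycle {0} g x \<partial>\<mu> \<partial>?n)"
    using good
    by (intro integral_dist_cocycle_eq[OF \<mu> prob_space_distr_line_rep[OF st] _ W good _ notin]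
        integral_distr_line_rep_stationary[OF \<mu>, of \<nu>] st assms(4)[folded log_distortion_def])
       (auto elim: eventually_mono)
  also have "\<dots> = alpha \<mu> {0} (distr ?n (proj_space {0}) (proj_class {0}))"
    using notin subspace_0[OF W]
    by (intro alpha_distr_proj_class[symmetric, OF \<mu> _ subspace_single_0 singleton_zero_neq_UNIV])
       (auto elim: eventually_mono)
  also have "\<dots> = alpha \<mu> {0} \<nu>" by (simp add: distr_line_rep_proj_class_zero[OF sets_\<nu>])
  finally show ?thesis .
qed

end
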